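(* Let $p\ge5$ be a prime. Let $F_0=0$, $F_1=1$, $F_n=F_{n-1}+F_{n-2}$ ($n\ge2$) be the Fibonacci numbers and $L_0=2$, $L_1=1$, $L_n=L_{n-1}+L_{n-2}$ ($n\ge2$) the Lucas numbers. Let $n$ be the least positive integer such that $p\mid F_n$. Then $$\sum_{j=1}^{n-1}\frac{L_j}{F_j}\equiv\frac{5(n^2-1)}{6}\cdot\frac{F_n}{L_n}\pmod{p^2}.$$
   Context: A congruence between rational numbers modulo $p^2$ means that the difference, written as a fraction whose denominator is coprime to $p$, has numerator divisible by $p^2$. *)

theory Defs
  imports "HOL-Number_Theory.Number_Theory"
begin

fun lucas :: "nat \<Rightarrow> nat" where
  "lucas 0 = 2"
| "lucas (Suc 0) = 1"
| "lucas (Suc (Suc n)) = lucas (Suc n) + lucas n"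

definition rat_cong_mod :: "rat \<Rightarrow> rat \<Rightarrow> int \<Rightarrow> int \<Rightarrow> bool" where
  "rat_cong_mod x y p m \<longleftrightarrow>
     (\<exists>a b. b \<noteq> 0 \<and> coprime b p \<and> m dvd a \<and> x - y = of_int a / of_int b)"

end

theory Submission
  imports Defs
begin

text \<open>
  Put \<open>x = -\<phi>\<^sup>2 = \<phi>/\<psi>\<close> in \<open>\<int>[\<phi>]\<close>. By Binet,
  \<open>x\<^sup>m - 1 = \<surd>5 F\<^sub>m (-\<phi>)\<^sup>m\<close>, so for \<open>p \<noteq> 5\<close> the rank of
  apparition \<open>n\<close> of \<open>p\<close> is the order of \<open>x\<close> modulo \<open>p\<close>,
  and \<open>x\<^sup>d - 1\<close> is invertible modulo \<open>p\<close> for \<open>0 < d < n\<close>.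
  For a primitive \<open>n\<close>-th root of unity \<open>\<zeta>\<close> one has
  \<open>\<Sum>0<j<n. 1/((\<zeta>\<^sup>j - 1)(\<zeta>\<^sup>-\<^sup>j - 1)) = (n\<^sup>2 - 1)/12\<close>;
  the proof of this identity only uses invertibility of the \<open>\<zeta>\<^sup>j - 1\<close>, so it holds
  for \<open>\<zeta> = x\<close> modulo \<open>p\<close>. Since
  \<open>(x\<^sup>j - 1)(x\<^sup>-\<^sup>j - 1) = -5 (-1)\<^sup>j F\<^sub>j\<^sup>2\<close> and \<open>p\<close> does not
  divide \<open>n\<close> (Frobenius), this gives
  \<open>12 \<Sum> (-1)\<^sup>j/F\<^sub>j\<^sup>2 \<equiv> -5(n\<^sup>2 - 1)\<close> modulo \<open>p\<close>.

  Pairing \<open>j\<close> with \<open>n - j\<close> and using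
  \<open>L\<^sub>j F\<^sub>n\<^sub>-\<^sub>j + L\<^sub>n\<^sub>-\<^sub>j F\<^sub>j = 2F\<^sub>n\<close> gives
  \<open>\<Sum> L\<^sub>j/F\<^sub>j = F\<^sub>n \<Sum> 1/(F\<^sub>j F\<^sub>n\<^sub>-\<^sub>j)\<close>, and
  \<open>2(-1)\<^sup>j F\<^sub>n\<^sub>-\<^sub>j \<equiv> -L\<^sub>n F\<^sub>j\<close> modulo \<open>p\<close> turns the last sum into
  \<open>-(2/L\<^sub>n) \<Sum> (-1)\<^sup>j/F\<^sub>j\<^sup>2 \<equiv> 5(n\<^sup>2 - 1)/(6L\<^sub>n)\<close>.
  Multiplying by \<open>F\<^sub>n \<equiv> 0\<close> gives the congruence modulo \<open>p\<^sup>2\<close>.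
\<close>

section \<open>The ring \<open>\<int>[\<phi>]\<close> and the Binet formulas\<close>

text \<open>\<open>ZPhi a b\<close> is \<open>a + b\<phi>\<close>; the product below comes from \<open>\<phi>\<^sup>2 = \<phi> + 1\<close>.\<close>

datatype zphi = ZPhi (re: int) (im: int)

lemma zphi_eq_iff: "z = w \<longleftrightarrow> re z = re w \<and> im z = im w"
  by (cases z; cases w) auto

instantiation zphi :: comm_ring_1
begin
definition "0 = ZPhi 0 0"
definition "1 = ZPhi 1 0"
definition "z + w = ZPhi (re z + re w) (im z + im w)"
definition "z - w = ZPhi (re z - re w) (im z - im w)"
definition "- z = ZPhi (- re z) (- im z)"
definition "z * w = ZPhi (re z * re w + im z * im w) (re z * im w + im z * re w + im z * im w)"
instance
  by standard (auto simp: zphi_eq_iff zero_zphi_def one_zphi_def plus_zphi_def minus_zphi_def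
      uminus_zphi_def times_zphi_def algebra_simps)
end

lemma re_zphi_simps [simp]:
  "re 0 = 0" "re 1 = 1" "re (z + w) = re z + re w" "re (z - w) = re z - re w" "re (- z) = - re z"
  "re (z * w) = re z * re w + im z * im w"
  by (simp_all add: zero_zphi_def one_zphi_def plus_zphi_def minus_zphi_def uminus_zphi_def
      times_zphi_def)

lemma im_zphi_simps [simp]:
  "im 0 = 0" "im 1 = 0" "im (z + w) = im z + im w" "im (z - w) = im z - im w" "im (- z) = - im z"
  "im (z * w) = re z * im w + im z * re w + im z * im w"
  by (simp_all add: zero_zphi_def one_zphi_def plus_zphi_def minus_zphi_def uminus_zphi_def
      times_zphi_def)

lemma re_of_nat [simp]: "re (of_nat k) = int k" and im_of_nat [simp]: "im (of_nat k) = 0"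
  by (induction k) auto

lemma re_of_int [simp]: "re (of_int k) = k" and im_of_int [simp]: "im (of_int k) = 0"
  by (cases k rule: int_cases; simp)+

lemma re_numeral [simp]: "re (numeral k) = numeral k" and im_numeral [simp]: "im (numeral k) = 0"
  using re_of_nat[of "numeral k"] im_of_nat[of "numeral k"] by simp_all

instance zphi :: ring_char_0
  by standard (auto intro: injI simp: zphi_eq_iff)

lemma of_int_dvd_zphi_iff: "(of_int p :: zphi) dvd z \<longleftrightarrow> p dvd re z \<and> p dvd im z"
proof
  assume "of_int p dvd z"
  then show "p dvd re z \<and> p dvd im z" by auto
next
  assume "p dvd re z \<and> p dvd im z"
  then obtain a b where "re z = p * a" "im z = p * b" by blast
  then have "z = of_int p * ZPhi a b" by (simp add: zphi_eq_iff)
  then show "of_int p dvd z" by simp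
qed

lemma of_nat_dvd_of_int_zphi_iff: "(of_nat p :: zphi) dvd of_int a \<longleftrightarrow> int p dvd a"
  using of_int_dvd_zphi_iff[of "int p" "of_int a"] by simp

lemma of_nat_dvd_one_zphi_iff: "(of_nat p :: zphi) dvd 1 \<longleftrightarrow> p = 1"
  using of_nat_dvd_of_int_zphi_iff[of p 1] by simp

lemma cong_imp_of_nat_dvd_zphi: "[a = b] (mod int p) \<Longrightarrow> (of_nat p :: zphi) dvd of_int a - of_int b"
  using of_nat_dvd_of_int_zphi_iff[of p "a - b"] by (simp add: cong_iff_dvd_diff)

definition phi :: zphi where "phi = ZPhi 0 1"
definition psi :: zphi where "psi = 1 - phi"
definition sqrt5 :: zphi where "sqrt5 = phi - psi"

lemma phi_times_psi: "phi * psi = -1"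
  by (simp add: psi_def phi_def zphi_eq_iff)

lemma sqrt5_squared: "sqrt5 ^ 2 = 5"
  by (simp add: sqrt5_def psi_def phi_def zphi_eq_iff power2_eq_square)

lemma sqrt5_mult_cancel: "sqrt5 * z = sqrt5 * w \<Longrightarrow> z = w"
  by (simp add: sqrt5_def psi_def phi_def zphi_eq_iff)

lemma phi_power_Suc_Suc: "phi ^ Suc (Suc k) = phi ^ Suc k + phi ^ k"
  and psi_power_Suc_Suc: "psi ^ Suc (Suc k) = psi ^ Suc k + psi ^ k"
  by (simp_all add: psi_def phi_def zphi_eq_iff algebra_simps)

lemma binet_fib: "sqrt5 * of_nat (fib k) = phi ^ k - psi ^ k"
proof (induction k rule: fib.induct)
  case (3 k)
  then show ?case
    by (simp only: fib.simps of_nat_add distrib_left phi_power_Suc_Suc psi_power_Suc_Suc) simp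
qed (simp_all add: sqrt5_def)

lemma binet_lucas: "of_nat (lucas k) = phi ^ k + psi ^ k"
proof (induction k rule: lucas.induct)
  case (3 k)
  then show ?case
    by (simp only: lucas.simps of_nat_add phi_power_Suc_Suc psi_power_Suc_Suc) simp
qed (simp_all add: psi_def)

lemma lucas_pos: "0 < lucas n"
  by (induction n rule: lucas.induct) auto

lemma phi_psi_power: "phi ^ k * psi ^ k = (-1) ^ k"
  by (simp add: phi_times_psi flip: power_mult_distrib)

lemma lucas_fib_cross_sum: "lucas j * fib k + lucas k * fib j = 2 * fib (j + k)"
proof -
  have "sqrt5 * of_nat (lucas j * fib k + lucas k * fib j)
      = of_nat (lucas j) * (sqrt5 * of_nat (fib k)) + of_nat (lucas k) * (sqrt5 * of_nat (fib j))"
    by (simp add: algebra_simps)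
  also have "\<dots> = (phi ^ j + psi ^ j) * (phi ^ k - psi ^ k) + (phi ^ k + psi ^ k) * (phi ^ j - psi ^ j)"
    by (simp only: binet_fib binet_lucas)
  also have "\<dots> = 2 * (phi ^ (j + k) - psi ^ (j + k))"
    by (simp add: algebra_simps power_add)
  also have "\<dots> = sqrt5 * of_nat (2 * fib (j + k))"
    by (simp add: mult.left_commute flip: binet_fib)
  finally show ?thesis
    by (metis sqrt5_mult_cancel of_nat_eq_iff)
qed

lemma fib_lucas_cross_diff:
  "2 * (-1) ^ j * int (fib k) = int (fib (j + k)) * int (lucas j) - int (lucas (j + k)) * int (fib j)"
proof -
  have "sqrt5 * of_int (int (fib (j + k)) * int (lucas j) - int (lucas (j + k)) * int (fib j))
      = sqrt5 * of_nat (fib (j + k)) * of_nat (lucas j) - of_nat (lucas (j + k)) * (sqrt5 * of_nat (fib j))"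
    by (simp add: algebra_simps)
  also have "\<dots> = (phi ^ (j + k) - psi ^ (j + k)) * (phi ^ j + psi ^ j)
      - (phi ^ (j + k) + psi ^ (j + k)) * (phi ^ j - psi ^ j)"
    by (simp only: binet_fib binet_lucas)
  also have "\<dots> = 2 * (phi ^ j * psi ^ j) * (phi ^ k - psi ^ k)"
    by (simp add: algebra_simps power_add)
  also have "\<dots> = sqrt5 * of_int (2 * (-1) ^ j * int (fib k))"
    by (simp add: phi_psi_power flip: binet_fib)
  finally show ?thesis
    by (metis sqrt5_mult_cancel of_int_eq_iff)
qed

lemma lucas_sq_sub_5_fib_sq: "int (lucas n) ^ 2 - 5 * int (fib n) ^ 2 = 4 * (-1) ^ n"
proof -
  have "(of_int (int (lucas n) ^ 2 - 5 * int (fib n) ^ 2) :: zphi)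
      = of_nat (lucas n) ^ 2 - (sqrt5 * of_nat (fib n)) ^ 2"
    by (simp add: power_mult_distrib sqrt5_squared)
  also have "\<dots> = (phi ^ n + psi ^ n) ^ 2 - (phi ^ n - psi ^ n) ^ 2"
    by (simp only: binet_fib binet_lucas)
  also have "\<dots> = of_int (4 * (-1) ^ n)"
    by (simp add: algebra_simps power2_eq_square phi_psi_power)
  finally show ?thesis
    by (metis of_int_eq_iff)
qed

lemma fib_dOcagne:
  "int (fib (i + k)) * int (fib (Suc i)) - int (fib (Suc (i + k))) * int (fib i) = (-1) ^ i * int (fib k)"
proof -
  have "sqrt5 * (sqrt5 * of_int (int (fib (i + k)) * int (fib (Suc i)) - int (fib (Suc (i + k))) * int (fib i)))
      = (sqrt5 * of_nat (fib (i + k))) * (sqrt5 * of_nat (fib (Suc i)))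
        - (sqrt5 * of_nat (fib (Suc (i + k)))) * (sqrt5 * of_nat (fib i))"
    by (simp add: algebra_simps)
  also have "\<dots> = (phi ^ (i + k) - psi ^ (i + k)) * (phi ^ Suc i - psi ^ Suc i)
      - (phi ^ Suc (i + k) - psi ^ Suc (i + k)) * (phi ^ i - psi ^ i)"
    by (simp only: binet_fib)
  also have "\<dots> = (phi ^ i * psi ^ i) * (phi - psi) * (phi ^ k - psi ^ k)"
    by (simp add: algebra_simps power_add)
  also have "\<dots> = sqrt5 * (sqrt5 * of_int ((-1) ^ i * int (fib k)))"
    by (simp add: phi_psi_power sqrt5_def flip: binet_fib)
  finally show ?thesis
    by (metis sqrt5_mult_cancel of_int_eq_iff)
qed

lemma fib_dvd_exists:
  assumes "0 < m"
  shows "\<exists>k>0. m dvd fib k"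
proof -
  define f where "f k = (fib k mod m, fib (Suc k) mod m)" for k
  have "f ` {..m * m} \<subseteq> {..<m} \<times> {..<m}"
    using assms unfolding f_def by auto
  then have "card (f ` {..m * m}) \<le> m * m"
    by (metis card_lessThan card_cartesian_product card_mono finite_SigmaI finite_lessThan)
  then have "\<not> inj_on f {..m * m}"
    using pigeonhole by (metis card_atMost le_imp_less_Suc)
  then obtain i j where ij: "i < j" "f i = f j"
    unfolding inj_on_def by (metis linorder_neqE_nat)
  then have "[fib (i + (j - i)) = fib i] (mod m)" "[fib (Suc (i + (j - i))) = fib (Suc i)] (mod m)"
    unfolding f_def cong_def by auto
  then have "[int (fib (i + (j - i))) * int (fib (Suc i)) - int (fib (Suc (i + (j - i)))) * int (fib i)
      = int (fib i) * int (fib (Suc i)) - int (fib (Suc i)) * int (fib i)] (mod int m)"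
    by (intro cong_diff cong_mult cong_refl) (simp_all add: cong_int_iff)
  then have "int m dvd (-1) ^ i * int (fib (j - i))"
    unfolding fib_dOcagne by (simp add: cong_0_iff)
  then have "m dvd fib (j - i)"
    using dvd_mult_unit_iff'[of "(-1) ^ i" "int m" "int (fib (j - i))"] by (simp add: is_unit_power_iff)
  then show ?thesis
    using ij by (intro exI[of _ "j - i"]) auto
qed

section \<open>Roots of unity modulo \<open>m\<close>\<close>

lemma dvd_power_diff:
  fixes a b m :: "'a::comm_ring_1"
  shows "m dvd a - b \<Longrightarrow> m dvd a ^ k - b ^ k"
  by (metis power_diff_sumr2 dvd_mult2)

lemma dvd_power_power_sub_one:
  fixes x m :: "'a::comm_ring_1"
  assumes "m dvd x ^ n - 1"
  shows "m dvd (x ^ k) ^ n - 1"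
proof -
  have "(x ^ k) ^ n = (x ^ n) ^ k"
    by (metis power_mult mult.commute)
  then show ?thesis
    using dvd_power_diff[OF assms, of k] by simp
qed

text \<open>Modulo a composite \<open>m\<close>, \<open>x\<^sup>d \<noteq> 1\<close> is too weak:
  primitivity asks \<open>x\<^sup>d - 1\<close> to be a unit.\<close>

definition primitive_root_unity_mod :: "'a::comm_ring_1 \<Rightarrow> nat \<Rightarrow> 'a \<Rightarrow> bool" where
  "primitive_root_unity_mod m n x \<longleftrightarrow>
     m dvd x ^ n - 1 \<and> (\<forall>d. 0 < d \<longrightarrow> d < n \<longrightarrow> (\<exists>a. m dvd a * (x ^ d - 1) - 1))"

lemma primitive_root_unity_mod_inverse:
  assumes xy: "x * y = 1" and x: "primitive_root_unity_mod m n x"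
  shows "primitive_root_unity_mod m n y"
proof -
  have xy_pow: "x ^ d * y ^ d = 1" for d
    using xy by (simp flip: power_mult_distrib)
  have y_pow: "y ^ d - 1 = - (y ^ d) * (x ^ d - 1)" for d
    using xy_pow[of d] by (simp add: algebra_simps)
  have "m dvd y ^ n - 1"
    using x unfolding primitive_root_unity_mod_def y_pow[of n] by (intro dvd_mult) blast
  moreover have "\<exists>b. m dvd b * (y ^ d - 1) - 1" if d: "0 < d" "d < n" for d
  proof -
    obtain a where a: "m dvd a * (x ^ d - 1) - 1"
      using x d unfolding primitive_root_unity_mod_def by blast
    have "(- (a * x ^ d)) * (y ^ d - 1) = a * (x ^ d - 1)"
      using xy_pow[of d] by (simp add: algebra_simps)
    then show ?thesis
      using a by (intro exI[of _ "- (a * x ^ d)"]) simp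
  qed
  ultimately show ?thesis
    unfolding primitive_root_unity_mod_def by blast
qed

lemma dvd_geometric_sum:
  fixes w a m :: "'a::comm_ring_1"
  assumes "m dvd w ^ n - 1" and "m dvd a * (w - 1) - 1"
  shows "m dvd (\<Sum>k<n. w ^ k)"
proof -
  have "(\<Sum>k<n. w ^ k) = a * (w ^ n - 1) - (a * (w - 1) - 1) * (\<Sum>k<n. w ^ k)"
    by (simp add: power_diff_1_eq algebra_simps)
  then show ?thesis
    using assms by (metis dvd_diff dvd_mult dvd_mult2)
qed

lemma primitive_root_unity_mod_sum_powers:
  assumes "primitive_root_unity_mod m n x" and "0 < d" and "d < n"
  shows "m dvd (\<Sum>j<n. (x ^ d) ^ j)"
proof -
  obtain a where "m dvd a * (x ^ d - 1) - 1"
    using assms unfolding primitive_root_unity_mod_def by blast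
  moreover have "m dvd (x ^ d) ^ n - 1"
    using assms unfolding primitive_root_unity_mod_def by (blast intro: dvd_power_power_sub_one)
  ultimately show ?thesis
    by (intro dvd_geometric_sum)
qed

lemma dvd_weighted_geometric_sum:
  fixes w b c m :: "'a::comm_ring_1"
  assumes "m dvd w ^ n - 1" and "m dvd (\<Sum>k<n. w ^ k)" and "m dvd b * (w - 1) - c"
  shows "m dvd of_nat n * b - c * (\<Sum>k<n. of_nat k * w ^ k)"
proof -
  define A where "A = (\<Sum>k<n. w ^ k)"
  define B where "B = (\<Sum>k<n. of_nat k * w ^ k)"
  have weighted: "(w - 1) * B + w * A = of_nat n * w ^ n"
    unfolding A_def B_def by (induction n) (simp_all add: algebra_simps)
  have "- (of_nat n * b) * (w ^ n - 1) + b * w * A + (b * (w - 1) - c) * B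
      = of_nat n * b - c * B + b * ((w - 1) * B + w * A - of_nat n * w ^ n)"
    by (simp add: algebra_simps)
  then have eq: "of_nat n * b - c * B = - (of_nat n * b) * (w ^ n - 1) + b * w * A + (b * (w - 1) - c) * B"
    by (simp add: weighted)
  show ?thesis
    unfolding B_def[symmetric] eq using assms unfolding A_def[symmetric]
    by (intro dvd_add dvd_mult dvd_mult2)
qed

lemma primitive_root_unity_mod_orthogonality:
  assumes x: "primitive_root_unity_mod m n x" and xy: "x * y = 1" and "k < n" and "l < n"
  shows "m dvd (\<Sum>j<n. (x ^ k * y ^ l) ^ j) - (if k = l then of_nat n else 0)"
proof (cases k l rule: linorder_cases)
  case less
  have "x ^ k * y ^ l = (x * y) ^ k * y ^ (l - k)"
    using less by (simp add: power_mult_distrib mult.assoc flip: power_add)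
  then have "x ^ k * y ^ l = y ^ (l - k)"
    using xy by simp
  then show ?thesis
    using primitive_root_unity_mod_sum_powers[OF primitive_root_unity_mod_inverse[OF xy x], of "l - k"]
      less assms by simp
next
  case equal
  then show ?thesis
    using xy by (simp flip: power_mult_distrib)
next
  case greater
  have "x ^ k = x ^ l * x ^ (k - l)"
    using greater by (simp flip: power_add)
  then have "x ^ k * y ^ l = (x * y) ^ l * x ^ (k - l)"
    by (simp add: power_mult_distrib mult_ac)
  then have "x ^ k * y ^ l = x ^ (k - l)"
    using xy by simp
  then show ?thesis
    using primitive_root_unity_mod_sum_powers[OF x, of "k - l"] greater assms by simp
qed

lemma sum_index_products_kronecker:
  "12 * (\<Sum>k<n. \<Sum>l<n. of_nat (k * l) * ((if k = l then of_nat n else 0) - 1))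
     = (of_nat n ^ 2 * (of_nat n ^ 2 - 1) :: 'a::comm_ring_1)"
proof -
  define A :: 'a where "A = (\<Sum>k<n. of_nat k)"
  define B :: 'a where "B = (\<Sum>k<n. of_nat k ^ 2)"
  have A: "2 * A = of_nat n * (of_nat n - 1)"
    unfolding A_def by (induction n) (simp_all add: algebra_simps)
  have B: "6 * B = of_nat n * (of_nat n - 1) * (2 * of_nat n - 1)"
    unfolding B_def by (induction n) (simp_all add: algebra_simps power2_eq_square)
  have "of_nat (k * l) * ((if k = l then of_nat n else 0) - 1)
      = (if k = l then of_nat n * of_nat k ^ 2 else 0) - of_nat k * (of_nat l :: 'a)" for k l
    by (simp add: algebra_simps power2_eq_square)
  then have "(\<Sum>k<n. \<Sum>l<n. of_nat (k * l) * ((if k = l then of_nat n else 0) - 1))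
      = (\<Sum>k<n. \<Sum>l<n. if k = l then of_nat n * of_nat k ^ 2 else 0)
        - (\<Sum>k<n. \<Sum>l<n. of_nat k * (of_nat l :: 'a))"
    by (simp only: sum_subtractf)
  also have "\<dots> = of_nat n * B - A ^ 2"
    unfolding A_def B_def power2_eq_square sum_product by (simp add: sum_distrib_left)
  finally have sum_eq: "(\<Sum>k<n. \<Sum>l<n. of_nat (k * l) * ((if k = l then of_nat n else 0) - 1))
      = of_nat n * B - A ^ 2" .
  have "12 * (of_nat n * B - A ^ 2) = 2 * of_nat n * (6 * B) - 3 * (2 * A) ^ 2"
    by (simp add: algebra_simps power2_eq_square)
  also have "\<dots> = of_nat n ^ 2 * (of_nat n ^ 2 - 1)"
    unfolding A B by (simp add: algebra_simps power2_eq_square)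
  finally show ?thesis
    unfolding sum_eq .
qed

lemma primitive_root_unity_mod_sum_weighted_products:
  assumes x: "primitive_root_unity_mod m n x" and xy: "x * y = 1" and n: "0 < n"
  shows "m dvd 12 * (\<Sum>j=1..<n. (\<Sum>k<n. of_nat k * (x ^ j) ^ k) * (\<Sum>l<n. of_nat l * (y ^ j) ^ l))
                - of_nat n ^ 2 * (of_nat n ^ 2 - 1)"
proof -
  define G where "G k l = (\<Sum>j=1..<n. (x ^ k * y ^ l) ^ j)" for k l
  define H where "H k l = (if k = l then of_nat n else 0) - (1 :: 'a)" for k l :: nat
  have "(\<Sum>j=1..<n. (\<Sum>k<n. of_nat k * (x ^ j) ^ k) * (\<Sum>l<n. of_nat l * (y ^ j) ^ l))
      = (\<Sum>j=1..<n. \<Sum>k<n. \<Sum>l<n. of_nat (k * l) * (x ^ k * y ^ l) ^ j)"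
    unfolding sum_product
    by (intro sum.cong refl) (simp add: power_mult_distrib mult_ac flip: power_mult)
  also have "\<dots> = (\<Sum>k<n. \<Sum>j=1..<n. \<Sum>l<n. of_nat (k * l) * (x ^ k * y ^ l) ^ j)"
    by (rule sum.swap)
  also have "\<dots> = (\<Sum>k<n. \<Sum>l<n. of_nat (k * l) * G k l)"
    unfolding G_def sum_distrib_left by (intro sum.cong refl sum.swap)
  finally have expand: "(\<Sum>j=1..<n. (\<Sum>k<n. of_nat k * (x ^ j) ^ k) * (\<Sum>l<n. of_nat l * (y ^ j) ^ l))
      = (\<Sum>k<n. \<Sum>l<n. of_nat (k * l) * G k l)" .
  have "m dvd G k l - H k l" if "k < n" "l < n" for k l
  proof -
    have "(\<Sum>j<n. (x ^ k * y ^ l) ^ j) = 1 + G k l"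
      unfolding G_def lessThan_atLeast0 using n by (simp add: sum.atLeast_Suc_lessThan)
    then show ?thesis
      using primitive_root_unity_mod_orthogonality[OF x xy that] unfolding H_def
      by (simp add: algebra_simps)
  qed
  then have "m dvd 12 * (\<Sum>k<n. \<Sum>l<n. of_nat (k * l) * (G k l - H k l))"
    by (intro dvd_mult dvd_sum) auto
  moreover have "12 * (\<Sum>k<n. \<Sum>l<n. of_nat (k * l) * H k l) = of_nat n ^ 2 * (of_nat n ^ 2 - 1)"
    unfolding H_def by (rule sum_index_products_kronecker)
  ultimately show ?thesis
    unfolding expand by (simp add: right_diff_distrib sum_subtractf)
qed

text \<open>With \<open>u j \<equiv> c/(x\<^sup>j - 1)\<close> and \<open>v j \<equiv> c/(y\<^sup>j - 1)\<close>,
  this is \<open>c\<^sup>2 n\<^sup>2\<close> times the identity \<open>\<Sum>\<^sub>j 1/((x\<^sup>j - 1)(x\<^sup>-\<^sup>j - 1)) = (n\<^sup>2 - 1)/12\<close>.\<close>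

lemma primitive_root_unity_mod_sum_inverse_products:
  assumes x: "primitive_root_unity_mod m n x" and xy: "x * y = 1" and n: "0 < n"
    and u: "\<And>j. 0 < j \<Longrightarrow> j < n \<Longrightarrow> m dvd u j * (x ^ j - 1) - c"
    and v: "\<And>j. 0 < j \<Longrightarrow> j < n \<Longrightarrow> m dvd v j * (y ^ j - 1) - c"
  shows "m dvd 12 * of_nat n ^ 2 * (\<Sum>j=1..<n. u j * v j) - c ^ 2 * (of_nat n ^ 2 * (of_nat n ^ 2 - 1))"
proof -
  define B where "B j = (\<Sum>k<n. of_nat k * (x ^ j) ^ k)" for j
  define C where "C j = (\<Sum>l<n. of_nat l * (y ^ j) ^ l)" for j
  have y: "primitive_root_unity_mod m n y"
    using xy x by (rule primitive_root_unity_mod_inverse)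
  have "m dvd of_nat n ^ 2 * (u j * v j) - c ^ 2 * (B j * C j)" if "j \<in> {1..<n}" for j
  proof -
    have "m dvd of_nat n * u j - c * B j"
      unfolding B_def using x that
      by (intro dvd_weighted_geometric_sum u dvd_power_power_sub_one primitive_root_unity_mod_sum_powers)
        (auto simp: primitive_root_unity_mod_def)
    moreover have "m dvd of_nat n * v j - c * C j"
      unfolding C_def using y that
      by (intro dvd_weighted_geometric_sum v dvd_power_power_sub_one primitive_root_unity_mod_sum_powers)
        (auto simp: primitive_root_unity_mod_def)
    moreover have "of_nat n ^ 2 * (u j * v j) - c ^ 2 * (B j * C j)
        = (of_nat n * u j - c * B j) * (of_nat n * v j) + c * B j * (of_nat n * v j - c * C j)"
      by (simp add: algebra_simps power2_eq_square)
    ultimately show ?thesis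
      by (simp add: dvd_add dvd_mult dvd_mult2)
  qed
  then have "m dvd (\<Sum>j=1..<n. of_nat n ^ 2 * (u j * v j) - c ^ 2 * (B j * C j))"
    by (rule dvd_sum)
  then have "m dvd of_nat n ^ 2 * (\<Sum>j=1..<n. u j * v j) - c ^ 2 * (\<Sum>j=1..<n. B j * C j)"
    by (simp add: sum_subtractf sum_distrib_left)
  moreover have "m dvd 12 * (\<Sum>j=1..<n. B j * C j) - of_nat n ^ 2 * (of_nat n ^ 2 - 1)"
    unfolding B_def C_def using x xy n by (rule primitive_root_unity_mod_sum_weighted_products)
  ultimately have "m dvd 12 * (of_nat n ^ 2 * (\<Sum>j=1..<n. u j * v j) - c ^ 2 * (\<Sum>j=1..<n. B j * C j))
      + c ^ 2 * (12 * (\<Sum>j=1..<n. B j * C j) - of_nat n ^ 2 * (of_nat n ^ 2 - 1))"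
    by (intro dvd_add dvd_mult)
  then show ?thesis
    by (simp add: algebra_simps)
qed

lemma prime_dvd_power_sub_one_sub:
  fixes z :: "'a::comm_ring_1"
  assumes p: "prime p"
  shows "of_nat p dvd (z - 1) ^ p - (z ^ p - 1)"
proof -
  have p2: "2 \<le> p"
    using p by (rule prime_ge_2_nat)
  define M where "M = (\<Sum>k\<in>{1..p-1}. of_nat (p choose k) * z ^ k * (-1) ^ (p - k))"
  have "{..p} = insert 0 (insert p {1..p-1})"
    using p2 by auto
  then have "(z - 1) ^ p = (-1) ^ p + (z ^ p + M)"
    using binomial_ring[of z "-1" p] p2 unfolding M_def by simp
  then have split: "(z - 1) ^ p - (z ^ p - 1) = M + ((-1) ^ p + 1)"
    by (simp add: algebra_simps)
  have "of_nat p dvd M"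
    unfolding M_def
  proof (intro dvd_sum dvd_mult2)
    fix k assume "k \<in> {1..p-1}"
    then have "p dvd (p choose k)"
      using p p2 by (intro dvd_choose_prime) auto
    then show "of_nat p dvd (of_nat (p choose k) :: 'a)"
      by (elim dvdE) simp
  qed
  moreover have "of_nat p dvd (-1) ^ p + (1 :: 'a)"
  proof (cases "odd p")
    case False
    then have "p = 2"
      using p p2 prime_odd_nat by force
    then show ?thesis by simp
  qed simp
  ultimately show ?thesis
    unfolding split by (rule dvd_add)
qed

lemma primitive_root_unity_mod_prime_not_dvd_order:
  fixes x :: "'a::comm_ring_1"
  assumes p: "prime p" and not_unit: "\<not> of_nat p dvd (1 :: 'a)"
    and x: "primitive_root_unity_mod (of_nat p) n x" and n: "0 < n"
  shows "\<not> p dvd n"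
proof
  assume "p dvd n"
  then obtain k where n_eq: "n = p * k" ..
  have "1 < p"
    using p by (rule prime_gt_1_nat)
  then have k: "0 < k" "k < n"
    using n n_eq by auto
  define z where "z = x ^ k"
  obtain a where a: "of_nat p dvd a * (z - 1) - 1"
    using x k unfolding primitive_root_unity_mod_def z_def by blast
  have "of_nat p dvd z ^ p - 1"
    using x unfolding primitive_root_unity_mod_def z_def n_eq by (simp add: power_mult mult.commute)
  then have "of_nat p dvd ((z - 1) ^ p - (z ^ p - 1)) + (z ^ p - 1)"
    by (intro dvd_add prime_dvd_power_sub_one_sub[OF p])
  then have "of_nat p dvd (z - 1) ^ p"
    by simp
  then have "of_nat p dvd (a * (z - 1)) ^ p"
    by (simp add: power_mult_distrib)
  moreover have "of_nat p dvd (a * (z - 1)) ^ p - 1 ^ p"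
    using a by (rule dvd_power_diff)
  ultimately have "of_nat p dvd (a * (z - 1)) ^ p - ((a * (z - 1)) ^ p - 1)"
    unfolding power_one by (rule dvd_diff)
  then have "of_nat p dvd (1 :: 'a)"
    by simp
  with not_unit show False ..
qed

section \<open>The root of unity \<open>-\<phi>\<^sup>2\<close> modulo \<open>p\<close>\<close>

lemma coprime_int_prime_not_dvd:
  assumes "prime p" and "\<not> p dvd k"
  shows "coprime (int k) (int p)"
  using assms by (metis coprime_commute coprime_int_iff prime_imp_coprime)

lemma prime_not_dvd_less:
  fixes p :: nat
  assumes "prime p" and "k < p" and "0 < k"
  shows "\<not> p dvd k"
  using assms by (auto dest: dvd_imp_le)

lemma prime_not_dvd_five:
  fixes p :: nat
  assumes "prime p" and "p \<noteq> 5"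
  shows "\<not> p dvd 5"
proof
  assume "p dvd 5"
  then have "p \<le> 5"
    by (simp add: dvd_imp_le)
  moreover have "2 \<le> p"
    using assms(1) by (rule prime_ge_2_nat)
  ultimately have "p = 2 \<or> p = 3 \<or> p = 4"
    using assms(2) by linarith
  with \<open>p dvd 5\<close> assms(1) show False
    by auto
qed

lemma coprime_six_prime:
  fixes p :: nat
  assumes "prime p" and "3 < p"
  shows "coprime (6 :: int) (int p)"
proof -
  have "\<not> p dvd 2" "\<not> p dvd 3"
    using prime_not_dvd_less[OF assms(1), of 2] prime_not_dvd_less[OF assms(1), of 3] assms(2)
    by auto
  then have "\<not> p dvd 2 * 3"
    using prime_dvd_mult_iff[OF assms(1)] by blast
  then show ?thesis
    using coprime_int_prime_not_dvd[OF assms(1), of 6] by simp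
qed

lemma neg_phi_times_psi_power: "(- phi) ^ m * psi ^ m = 1"
  and neg_psi_times_phi_power: "(- psi) ^ m * phi ^ m = 1"
  by (simp_all add: phi_times_psi mult.commute[of psi] flip: power_mult_distrib)

lemma neg_phi_sq_power_sub_one: "(- (phi ^ 2)) ^ m - 1 = sqrt5 * of_nat (fib m) * (- phi) ^ m"
proof -
  have "(- (phi ^ 2)) ^ m = (- phi) ^ m * phi ^ m"
    by (simp add: power2_eq_square flip: power_mult_distrib)
  then show ?thesis
    using neg_phi_times_psi_power[of m] by (simp add: binet_fib algebra_simps)
qed

lemma neg_psi_sq_power_sub_one: "(- (psi ^ 2)) ^ m - 1 = - (sqrt5 * of_nat (fib m) * (- psi) ^ m)"
proof -
  have "(- (psi ^ 2)) ^ m = (- psi) ^ m * psi ^ m"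
    by (simp add: power2_eq_square flip: power_mult_distrib)
  then show ?thesis
    using neg_psi_times_phi_power[of m] by (simp add: binet_fib algebra_simps)
qed

lemma neg_phi_sq_times_neg_psi_sq: "(- (phi ^ 2)) * (- (psi ^ 2)) = 1"
  by (simp add: phi_times_psi flip: power_mult_distrib)

lemma neg_phi_sq_power_sub_one_mult:
  "sqrt5 * of_int g * psi ^ j * ((- (phi ^ 2)) ^ j - 1) = of_int (5 * (int (fib j) * g))"
proof -
  have "sqrt5 * of_int g * psi ^ j * ((- (phi ^ 2)) ^ j - 1)
      = sqrt5 ^ 2 * of_int (int (fib j) * g) * ((- phi) ^ j * psi ^ j)"
    unfolding neg_phi_sq_power_sub_one by (simp add: algebra_simps power2_eq_square)
  then show ?thesis
    unfolding sqrt5_squared neg_phi_times_psi_power by simp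
qed

lemma neg_psi_sq_power_sub_one_mult:
  "- (sqrt5 * of_int g * phi ^ j) * ((- (psi ^ 2)) ^ j - 1) = of_int (5 * (int (fib j) * g))"
proof -
  have "- (sqrt5 * of_int g * phi ^ j) * ((- (psi ^ 2)) ^ j - 1)
      = sqrt5 ^ 2 * of_int (int (fib j) * g) * ((- psi) ^ j * phi ^ j)"
    unfolding neg_psi_sq_power_sub_one by (simp add: algebra_simps power2_eq_square)
  then show ?thesis
    unfolding sqrt5_squared neg_psi_times_phi_power by simp
qed

lemma primitive_root_unity_mod_neg_phi_sq:
  assumes p: "prime p" "p \<noteq> 5" and Fn: "p dvd fib n"
    and Fj: "\<And>j. 0 < j \<Longrightarrow> j < n \<Longrightarrow> \<not> p dvd fib j"
  shows "primitive_root_unity_mod (of_nat p) n (- (phi ^ 2))"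
  unfolding primitive_root_unity_mod_def
proof (intro conjI allI impI)
  show "of_nat p dvd (- (phi ^ 2)) ^ n - 1"
    unfolding neg_phi_sq_power_sub_one
    by (rule dvd_mult2, rule dvd_mult) (use Fn in \<open>auto elim!: dvdE\<close>)
next
  fix d :: nat assume d: "0 < d" "d < n"
  have "coprime (5 * int (fib d)) (int p)"
    using coprime_int_prime_not_dvd[OF p(1) prime_not_dvd_five[OF p]]
      coprime_int_prime_not_dvd[OF p(1) Fj[OF d]] by simp
  then obtain e where e: "[5 * int (fib d) * e = 1] (mod int p)"
    using cong_solve_coprime_int by blast
  have "of_nat p dvd (of_int (5 * (int (fib d) * e)) :: zphi) - 1"
    using cong_imp_of_nat_dvd_zphi[OF e] by (simp add: mult.assoc)
  then show "\<exists>a. of_nat p dvd a * ((- (phi ^ 2)) ^ d - 1) - 1"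
    by (metis neg_phi_sq_power_sub_one_mult)
qed

lemma fib_rank_alternating_sum_inverse_sq_cong:
  fixes p n :: nat and g :: "nat \<Rightarrow> int"
  assumes p: "prime p" "p \<noteq> 5" and n: "0 < n" and Fn: "p dvd fib n"
    and g: "\<And>j. 0 < j \<Longrightarrow> j < n \<Longrightarrow> [int (fib j) * g j = 1] (mod int p)"
  shows "[12 * (\<Sum>j=1..<n. (-1) ^ j * g j ^ 2) = - 5 * (int n ^ 2 - 1)] (mod int p)"
proof -
  define x where "x = - (phi ^ 2)"
  \<comment> \<open>modulo \<open>p\<close>, \<open>u j \<equiv> 5/(x\<^sup>j - 1)\<close> and \<open>v j \<equiv> 5/(y\<^sup>j - 1)\<close>,
    where \<open>y = -\<psi>\<^sup>2 = 1/x\<close>\<close>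
  define u where "u j = sqrt5 * of_int (g j) * psi ^ j" for j
  define v where "v j = - (sqrt5 * of_int (g j) * phi ^ j)" for j
  have Fj: "\<not> p dvd fib j" if "0 < j" "j < n" for j
    using g[OF that] prime_gt_1_nat[OF p(1)] by (auto simp: cong_def elim!: dvdE)
  have x: "primitive_root_unity_mod (of_nat p) n x"
    unfolding x_def using p Fn Fj by (rule primitive_root_unity_mod_neg_phi_sq)
  have five: "of_nat p dvd (of_int (5 * (int (fib j) * g j)) :: zphi) - 5" if "0 < j" "j < n" for j
    using cong_imp_of_nat_dvd_zphi[OF cong_scalar_left[OF g[OF that], of 5]] by simp
  have u: "of_nat p dvd u j * (x ^ j - 1) - 5" if "0 < j" "j < n" for j
    unfolding u_def x_def neg_phi_sq_power_sub_one_mult using five[OF that] .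
  have v: "of_nat p dvd v j * ((- (psi ^ 2)) ^ j - 1) - 5" if "0 < j" "j < n" for j
    unfolding v_def neg_psi_sq_power_sub_one_mult using five[OF that] .
  have "of_nat p dvd 12 * of_nat n ^ 2 * (\<Sum>j=1..<n. u j * v j) - 5 ^ 2 * (of_nat n ^ 2 * (of_nat n ^ 2 - 1))"
    using x neg_phi_sq_times_neg_psi_sq n u v unfolding x_def
    by (rule primitive_root_unity_mod_sum_inverse_products)
  moreover have "u j * v j = of_int (- 5 * ((-1) ^ j * g j ^ 2))" for j
  proof -
    have "u j * v j = - (sqrt5 ^ 2 * of_int (g j) ^ 2 * (phi ^ j * psi ^ j))"
      unfolding u_def v_def by (simp add: algebra_simps power2_eq_square)
    then show ?thesis
      unfolding sqrt5_squared phi_psi_power by simp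
  qed
  ultimately have "int p dvd (- 5 * int n ^ 2) * (12 * (\<Sum>j=1..<n. (-1) ^ j * g j ^ 2) + 5 * (int n ^ 2 - 1))"
    unfolding of_nat_dvd_of_int_zphi_iff[symmetric]
    by (simp add: algebra_simps of_int_sum sum_distrib_left power2_eq_square)
  moreover have "\<not> p dvd n"
    using p(1) _ x n by (rule primitive_root_unity_mod_prime_not_dvd_order)
      (use p(1) in \<open>auto simp: of_nat_dvd_one_zphi_iff\<close>)
  ultimately have "int p dvd 12 * (\<Sum>j=1..<n. (-1) ^ j * g j ^ 2) + 5 * (int n ^ 2 - 1)"
    using p prime_not_dvd_five[OF p] int_dvd_int_iff[of p 5]
    by (auto simp: prime_dvd_mult_iff prime_dvd_power_iff)
  then show ?thesis
    by (simp add: cong_iff_dvd_diff algebra_simps)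
qed

section \<open>Congruences of \<open>p\<close>-integral rationals\<close>

lemma rat_cong_mod_iff_sub: "rat_cong_mod x y p m \<longleftrightarrow> rat_cong_mod (x - y) 0 p m"
  by (simp add: rat_cong_mod_def)

lemma rat_cong_mod_of_int_div:
  assumes "b \<noteq> 0" and "coprime b p" and "m dvd a - c * b"
  shows "rat_cong_mod (of_int a / of_int b) (of_int c) p m"
  unfolding rat_cong_mod_def
  using assms by (intro exI[of _ "a - c * b"] exI[of _ b]) (simp add: field_simps)

lemma rat_cong_mod_of_int: "m dvd a - c \<Longrightarrow> rat_cong_mod (of_int a) (of_int c) p m"
  using rat_cong_mod_of_int_div[of 1 p m a c] by simp

lemma rat_cong_mod_refl: "rat_cong_mod x x p m"
  unfolding rat_cong_mod_def by (intro exI[of _ 0] exI[of _ 1]) simp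

lemma rat_cong_mod_add:
  assumes "rat_cong_mod x y p m" and "rat_cong_mod x' y' p m"
  shows "rat_cong_mod (x + x') (y + y') p m"
proof -
  obtain a b where ab: "b \<noteq> 0" "coprime b p" "m dvd a" "x - y = of_int a / of_int b"
    using assms(1) unfolding rat_cong_mod_def by blast
  obtain a' b' where ab': "b' \<noteq> 0" "coprime b' p" "m dvd a'" "x' - y' = of_int a' / of_int b'"
    using assms(2) unfolding rat_cong_mod_def by blast
  have "(x + x') - (y + y') = of_int a / of_int b + of_int a' / of_int b'"
    using ab ab' by (simp add: algebra_simps flip: ab(4) ab'(4))
  also have "\<dots> = of_int (a * b' + a' * b) / of_int (b * b')"
    using ab ab' by (simp add: field_simps)
  finally have "(x + x') - (y + y') = of_int (a * b' + a' * b) / of_int (b * b')" .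
  then show ?thesis
    unfolding rat_cong_mod_def using ab ab' by (intro exI[of _ "a * b' + a' * b"] exI[of _ "b * b'"]) simp
qed

lemma rat_cong_mod_trans:
  assumes "rat_cong_mod x y p m" and "rat_cong_mod y z p m"
  shows "rat_cong_mod x z p m"
  using rat_cong_mod_add[OF assms] by (simp add: rat_cong_mod_iff_sub[of _ z] rat_cong_mod_iff_sub[of "x + y"])

lemma rat_cong_mod_sum:
  "(\<And>i. i \<in> A \<Longrightarrow> rat_cong_mod (f i) (g i) p m) \<Longrightarrow> rat_cong_mod (\<Sum>i\<in>A. f i) (\<Sum>i\<in>A. g i) p m"
  by (induction A rule: infinite_finite_induct) (auto intro: rat_cong_mod_add rat_cong_mod_refl)

lemma rat_cong_mod_mult:
  assumes "b \<noteq> 0" and "coprime b p" and "k dvd a" and "rat_cong_mod x y p m"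
  shows "rat_cong_mod (of_int a / of_int b * x) (of_int a / of_int b * y) p (k * m)"
proof -
  obtain a' b' where ab': "b' \<noteq> 0" "coprime b' p" "m dvd a'" "x - y = of_int a' / of_int b'"
    using assms(4) unfolding rat_cong_mod_def by blast
  have "of_int a / of_int b * x - of_int a / of_int b * y = of_int a / of_int b * (x - y)"
    by (simp only: right_diff_distrib)
  also have "\<dots> = of_int (a * a') / of_int (b * b')"
    by (simp add: ab'(4))
  finally have "of_int a / of_int b * x - of_int a / of_int b * y = of_int (a * a') / of_int (b * b')" .
  then show ?thesis
    unfolding rat_cong_mod_def using assms ab' by (intro exI[of _ "a * a'"] exI[of _ "b * b'"]) (simp add: mult_dvd_mono)
qed

lemma rat_cong_mod_mult_of_int:
  "rat_cong_mod x y p m \<Longrightarrow> rat_cong_mod (of_int a * x) (of_int a * y) p m"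
  using rat_cong_mod_mult[of 1 p 1 a x y m] by simp

section \<open>The sum \<open>\<Sum> L\<^sub>j/F\<^sub>j\<close>\<close>

lemma sum_lucas_div_fib_eq:
  "(\<Sum>j=1..n-1. of_nat (lucas j) / of_nat (fib j) :: rat)
     = of_nat (fib n) * (\<Sum>j=1..n-1. 1 / (of_nat (fib j) * of_nat (fib (n - j))))"
proof -
  have pair: "of_nat (lucas j) / of_nat (fib j) + of_nat (lucas (n - j)) / of_nat (fib (n - j))
      = 2 * of_nat (fib n) * (1 / (of_nat (fib j) * of_nat (fib (n - j))) :: rat)"
    if "j \<in> {1..n-1}" for j
  proof -
    have j: "0 < j" "0 < n - j"
      using that by auto
    have "j + (n - j) = n"
      using j by simp
    then have "lucas j * fib (n - j) + lucas (n - j) * fib j = 2 * fib n"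
      using lucas_fib_cross_sum[of j "n - j"] by simp
    then have "(of_nat (lucas j) * of_nat (fib (n - j)) + of_nat (lucas (n - j)) * of_nat (fib j) :: rat)
        = 2 * of_nat (fib n)"
      by (metis of_nat_add of_nat_mult of_nat_numeral)
    moreover have "(of_nat (fib j) :: rat) \<noteq> 0" "(of_nat (fib (n - j)) :: rat) \<noteq> 0"
      using fib_neq_0_nat[OF j(1)] fib_neq_0_nat[OF j(2)] by simp_all
    ultimately show ?thesis
      by (simp add: field_simps)
  qed
  have "(\<Sum>j=1..n-1. of_nat (lucas (n - j)) / of_nat (fib (n - j)) :: rat)
      = (\<Sum>j=1..n-1. of_nat (lucas j) / of_nat (fib j))"
    using sum.atLeastAtMost_rev[of "\<lambda>j. of_nat (lucas j) / of_nat (fib j) :: rat" 1 "n - 1"]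
    by (cases n) simp_all
  then have "2 * (\<Sum>j=1..n-1. of_nat (lucas j) / of_nat (fib j) :: rat)
      = (\<Sum>j=1..n-1. of_nat (lucas j) / of_nat (fib j) + of_nat (lucas (n - j)) / of_nat (fib (n - j)))"
    by (simp add: sum.distrib)
  also have "\<dots> = 2 * of_nat (fib n) * (\<Sum>j=1..n-1. 1 / (of_nat (fib j) * of_nat (fib (n - j))))"
    unfolding sum_distrib_left by (rule sum.cong[OF refl pair])
  finally show ?thesis
    by simp
qed

lemma inverse_fib_product_rat_cong:
  fixes p n j :: nat
  assumes Fn: "p dvd fib n" and j: "0 < j" "j < n"
    and coprime: "coprime (int (fib j)) (int p)" "coprime (int (fib (n - j))) (int p)"
      "coprime (int (lucas n)) (int p)"
  shows "rat_cong_mod (1 / (of_nat (fib j) * of_nat (fib (n - j))))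
           (- 2 * (-1) ^ j / (of_nat (lucas n) * of_nat (fib j) ^ 2)) (int p) (int p)"
proof -
  define b where "b = int (lucas n) * int (fib j) ^ 2 * int (fib (n - j))"
  have cross: "2 * (-1) ^ j * int (fib (n - j)) = int (fib n) * int (lucas j) - int (lucas n) * int (fib j)"
    using fib_lucas_cross_diff[of j "n - j"] j by simp
  have key: "2 * (-1) ^ j * (of_nat (fib (n - j)) :: rat)
      = of_nat (fib n) * of_nat (lucas j) - of_nat (lucas n) * of_nat (fib j)"
    using arg_cong[OF cross, of "of_int :: int \<Rightarrow> rat"] by simp
  have nonzero: "(of_nat (fib j) :: rat) \<noteq> 0" "(of_nat (fib (n - j)) :: rat) \<noteq> 0"
    "(of_nat (lucas n) :: rat) \<noteq> 0"
    using fib_neq_0_nat[of j] fib_neq_0_nat[of "n - j"] j lucas_pos[of n] by simp_all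
  have "1 / (of_nat (fib j) * of_nat (fib (n - j))) - (- 2 * (-1) ^ j / (of_nat (lucas n) * of_nat (fib j) ^ 2))
      = (of_nat (lucas n) * of_nat (fib j) + 2 * (-1) ^ j * of_nat (fib (n - j)))
        / (of_nat (lucas n) * of_nat (fib j) ^ 2 * of_nat (fib (n - j)) :: rat)"
    using nonzero by (simp add: field_simps power2_eq_square)
  also have "\<dots> = of_int (int (fib n) * int (lucas j)) / of_int b"
    unfolding key b_def by simp
  finally show ?thesis
    unfolding rat_cong_mod_def b_def using coprime nonzero Fn
    by (intro exI[of _ "int (fib n) * int (lucas j)"] exI[of _ b]) (auto simp: b_def)
qed

lemma fib_rank_alternating_sum_inverse_sq_rat_cong:
  fixes p n :: nat
  assumes p: "prime p" "p \<noteq> 5" and n: "0 < n" and Fn: "p dvd fib n"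
    and Fj: "\<And>j. 0 < j \<Longrightarrow> j < n \<Longrightarrow> \<not> p dvd fib j"
  shows "rat_cong_mod (12 * (\<Sum>j=1..n-1. (-1) ^ j / of_nat (fib j) ^ 2)) (- 5 * (of_nat n ^ 2 - 1))
           (int p) (int p)"
proof -
  have "\<exists>g. [int (fib j) * g = 1] (mod int p)" if "0 < j" "j < n" for j
    using coprime_int_prime_not_dvd[OF p(1) Fj[OF that]] by (rule cong_solve_coprime_int)
  then obtain g where g: "\<And>j. 0 < j \<Longrightarrow> j < n \<Longrightarrow> [int (fib j) * g j = 1] (mod int p)"
    by metis
  have "rat_cong_mod (of_int (12 * (-1) ^ j) * (1 / of_nat (fib j) ^ 2)) (of_int (12 * (-1) ^ j) * of_int (g j ^ 2))
      (int p) (int p)" if "j \<in> {1..n-1}" for j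
  proof (rule rat_cong_mod_mult_of_int)
    have j: "0 < j" "j < n"
      using that by auto
    have "int p dvd (1 - int (fib j) * g j) * (1 + int (fib j) * g j)"
      using g[OF j] by (simp add: cong_iff_dvd_diff dvd_diff_commute)
    then show "rat_cong_mod (1 / of_nat (fib j) ^ 2) (of_int (g j ^ 2)) (int p) (int p)"
      using rat_cong_mod_of_int_div[of "int (fib j) ^ 2" p p 1 "g j ^ 2"] fib_neq_0_nat[OF j(1)]
        coprime_int_prime_not_dvd[OF p(1) Fj[OF j]]
      by (simp add: algebra_simps power2_eq_square)
  qed
  then have "rat_cong_mod (\<Sum>j=1..n-1. of_int (12 * (-1) ^ j) * (1 / of_nat (fib j) ^ 2))
      (\<Sum>j=1..n-1. of_int (12 * (-1) ^ j) * of_int (g j ^ 2)) (int p) (int p)"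
    by (rule rat_cong_mod_sum)
  moreover have "{1..<n} = {1..n-1}"
    using n by auto
  ultimately have sum_cong: "rat_cong_mod (12 * (\<Sum>j=1..n-1. (-1) ^ j / of_nat (fib j) ^ 2))
      (of_int (12 * (\<Sum>j=1..<n. (-1) ^ j * g j ^ 2))) (int p) (int p)"
    by (simp add: sum_distrib_left of_int_sum mult.assoc)
  moreover have "int p dvd 12 * (\<Sum>j=1..<n. (-1) ^ j * g j ^ 2) - - 5 * (int n ^ 2 - 1)"
    using fib_rank_alternating_sum_inverse_sq_cong[OF p n Fn g] by (simp only: cong_iff_dvd_diff)
  then have "rat_cong_mod (of_int (12 * (\<Sum>j=1..<n. (-1) ^ j * g j ^ 2))) (of_int (- 5 * (int n ^ 2 - 1)))
      (int p) (int p)"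
    by (rule rat_cong_mod_of_int)
  then show ?thesis
    using rat_cong_mod_trans[OF sum_cong] by simp
qed

lemma coprime_lucas_fib_dvd:
  fixes p n :: nat
  assumes p: "prime p" "2 < p" and Fn: "p dvd fib n"
  shows "coprime (int (lucas n)) (int p)"
proof (rule coprime_int_prime_not_dvd[OF p(1)], rule notI)
  assume "p dvd lucas n"
  then have "int p dvd int (lucas n) ^ 2 - 5 * int (fib n) ^ 2"
    unfolding power2_eq_square using Fn by (intro dvd_diff dvd_mult) auto
  then have "int p dvd 4 * (-1) ^ n * (-1) ^ n"
    unfolding lucas_sq_sub_5_fib_sq by (rule dvd_mult2)
  then have "int p dvd int (2 * 2)"
    by (simp add: mult.assoc flip: power_mult_distrib)
  then have "p dvd 2"
    using p(1) by (simp only: int_dvd_int_iff prime_dvd_mult_iff) simp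
  then show False
    using prime_not_dvd_less[OF p(1) p(2)] by simp
qed

lemma sum_inverse_fib_products_rat_cong:
  fixes p n :: nat
  assumes p: "prime p" "5 < p" and n: "0 < n" and Fn: "p dvd fib n"
    and Fj: "\<And>j. 0 < j \<Longrightarrow> j < n \<Longrightarrow> \<not> p dvd fib j"
  shows "rat_cong_mod (\<Sum>j=1..n-1. 1 / (of_nat (fib j) * of_nat (fib (n - j))))
           (5 * (of_nat n ^ 2 - 1) / (6 * of_nat (lucas n))) (int p) (int p)"
proof -
  define c where "c = (of_int (- 1) / of_int (6 * int (lucas n)) :: rat)"
  have L: "coprime (int (lucas n)) (int p)"
    using p Fn by (intro coprime_lucas_fib_dvd) auto
  have "rat_cong_mod (\<Sum>j=1..n-1. 1 / (of_nat (fib j) * of_nat (fib (n - j))))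
      (\<Sum>j=1..n-1. - 2 * (-1) ^ j / (of_nat (lucas n) * of_nat (fib j) ^ 2)) (int p) (int p)"
    using Fn L coprime_int_prime_not_dvd[OF p(1) Fj]
    by (intro rat_cong_mod_sum inverse_fib_product_rat_cong) auto
  also have "(\<Sum>j=1..n-1. - 2 * (-1) ^ j / (of_nat (lucas n) * of_nat (fib j) ^ 2))
      = c * (12 * (\<Sum>j=1..n-1. (-1) ^ j / of_nat (fib j) ^ 2))"
    unfolding c_def by (simp add: sum_distrib_left sum_divide_distrib)
  finally have "rat_cong_mod (\<Sum>j=1..n-1. 1 / (of_nat (fib j) * of_nat (fib (n - j))))
      (c * (12 * (\<Sum>j=1..n-1. (-1) ^ j / of_nat (fib j) ^ 2))) (int p) (int p)" .
  moreover have "rat_cong_mod (c * (12 * (\<Sum>j=1..n-1. (-1) ^ j / of_nat (fib j) ^ 2)))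
      (c * (- 5 * (of_nat n ^ 2 - 1))) (int p) (1 * int p)"
    unfolding c_def using coprime_six_prime[OF p(1)] p(2) L lucas_pos[of n]
    by (intro rat_cong_mod_mult fib_rank_alternating_sum_inverse_sq_rat_cong p n Fn Fj) auto
  ultimately have "rat_cong_mod (\<Sum>j=1..n-1. 1 / (of_nat (fib j) * of_nat (fib (n - j))))
      (c * (- 5 * (of_nat n ^ 2 - 1))) (int p) (int p)"
    by (simp add: rat_cong_mod_trans)
  moreover have "c * (- 5 * (of_nat n ^ 2 - 1)) = 5 * (of_nat n ^ 2 - 1) / (6 * of_nat (lucas n))"
    unfolding c_def using lucas_pos[of n] by (simp add: field_simps)
  ultimately show ?thesis
    by simp
qed

lemma sum_lucas_div_fib_rat_cong:
  fixes p n :: nat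
  assumes p: "prime p" "5 < p" and n: "0 < n" and Fn: "p dvd fib n"
    and Fj: "\<And>j. 0 < j \<Longrightarrow> j < n \<Longrightarrow> \<not> p dvd fib j"
  shows "rat_cong_mod
           (\<Sum>j = 1..n-1. of_nat (lucas j) / of_nat (fib j))
           (of_int (5 * (int n ^ 2 - 1)) / 6 * (of_nat (fib n) / of_nat (lucas n)))
           (int p) (int p ^ 2)"
proof -
  have cong: "rat_cong_mod
      (of_nat (fib n) * (\<Sum>j=1..n-1. 1 / (of_nat (fib j) * of_nat (fib (n - j)))))
      (of_nat (fib n) * (5 * (of_nat n ^ 2 - 1) / (6 * of_nat (lucas n))))
      (int p) (int p ^ 2)"
    using rat_cong_mod_mult[OF _ _ _ sum_inverse_fib_products_rat_cong[OF p n Fn Fj], of 1 "int p" "int (fib n)"] Fn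
    by (simp add: power2_eq_square)
  have rhs: "of_int (5 * (int n ^ 2 - 1)) / 6 * (of_nat (fib n) / of_nat (lucas n))
      = of_nat (fib n) * (5 * (of_nat n ^ 2 - 1) / (6 * of_nat (lucas n)) :: rat)"
    by simp
  show ?thesis
    unfolding sum_lucas_div_fib_eq rhs by (rule cong)
qed

lemma fib_rank_five: "(LEAST k. 0 < k \<and> 5 dvd fib k) = 5"
proof (rule Least_equality)
  show "0 < (5::nat) \<and> 5 dvd fib 5"
    by (simp add: numeral_eq_Suc)
next
  fix k :: nat assume k: "0 < k \<and> 5 dvd fib k"
  show "5 \<le> k"
  proof (rule ccontr)
    assume "\<not> 5 \<le> k"
    then have "k = 1 \<or> k = 2 \<or> k = 3 \<or> k = 4"
      using k by auto
    moreover have "fib 3 = 2" "fib 4 = 3"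
      by (simp_all add: numeral_eq_Suc)
    ultimately show False
      using k by auto
  qed
qed

text \<open>For \<open>p = 5\<close>, \<open>\<surd>5\<close> is not invertible modulo \<open>p\<close>;
  there the rank is 5 and the difference is \<open>-25/33\<close>.\<close>

lemma sum_lucas_div_fib_rat_cong_five:
  "rat_cong_mod (\<Sum>j = 1..5-1. of_nat (lucas j) / of_nat (fib j))
     (of_int (5 * (int 5 ^ 2 - 1)) / 6 * (of_nat (fib 5) / of_nat (lucas 5))) (int 5) (int 5 ^ 2)"
proof -
  have "(\<Sum>j = 1..4. of_nat (lucas j) / of_nat (fib j))
      - of_int (5 * (int 5 ^ 2 - 1)) / 6 * (of_nat (fib 5) / of_nat (lucas 5)) = (of_int (- 25) / of_int 33 :: rat)"
    by (simp add: numeral_eq_Suc)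
  moreover have "coprime (33 :: int) 5"
    by (simp add: coprime_iff_gcd_eq_1 gcd_non_0_int)
  ultimately show ?thesis
    unfolding rat_cong_mod_def by (intro exI[of _ "- 25"] exI[of _ 33]) simp
qed

theorem corollary1p2:
  fixes p n :: nat
  assumes "prime p" and "p \<ge> 5"
    and "n = (LEAST k. k > 0 \<and> p dvd fib k)"
  shows "rat_cong_mod
           (\<Sum>j = 1..n-1. of_nat (lucas j) / of_nat (fib j))
           (of_int (5 * (int n ^ 2 - 1)) / 6 * (of_nat (fib n) / of_nat (lucas n)))
           (int p) (int p ^ 2)"
proof (cases "p = 5")
  case True
  then have "n = 5"
    using assms(3) fib_rank_five by simp
  then show ?thesis
    unfolding True using sum_lucas_div_fib_rat_cong_five by simp
next
  case False
  then have p: "prime p" "5 < p"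
    using assms(1,2) by auto
  have "\<exists>k. 0 < k \<and> p dvd fib k"
    using fib_dvd_exists[of p] p by auto
  then have "0 < n \<and> p dvd fib n"
    unfolding assms(3) by (rule LeastI_ex)
  moreover have "\<not> p dvd fib j" if "0 < j" "j < n" for j
    using not_less_Least[of j "\<lambda>k. 0 < k \<and> p dvd fib k"] that unfolding assms(3) by auto
  ultimately show ?thesis
    using sum_lucas_div_fib_rat_cong[OF p] by blast
qed

end
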